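(* For every finite set of formulas $\Gamma\cup\{\varphi\}\subseteq For$: $\Gamma \vdash_{\bf Tm} \varphi$ if and only if there exists a set of formulas $\Upsilon$ such that $\Gamma\cup\{\circ' \gamma \ : \ \gamma \in \Upsilon\} \vdash_{\bf Dm} \varphi$, where $\circ'\gamma:=(\Box\gamma\to\gamma)\wedge(\Box\neg\gamma\to\neg\gamma)$.
   Context: Formulas are built from a denumerable set of propositional variables by the unary connectives $\neg$, $\Box$ and the binary connective $\to$; $For$ is the set of all formulas. Abbreviations: $\Diamond\alpha:=\neg\Box\neg\alpha$, $\alpha\vee\beta:=\neg\alpha\to\beta$, $\alpha\wedge\beta:=\neg(\alpha\to\neg\beta)$. All Hilbert calculi below have as axioms all instances (over $For$) of the axiom schemas of a standard Hilbert calculus for classical propositional logic in the signature $\{\neg,\to\}$, plus the listed modal schemas, with modus ponens as the only rule; $\Gamma\vdash_{\bf L}\alpha$ means there is a derivation of $\alpha$ from $\Gamma$ in ${\bf L}$. ${\bf Dm}$: (K) $\Box(\alpha\to\beta)\to(\Box\alpha\to\Box\beta)$; (K1) $\Box(\alpha\to\beta)\to(\Diamond\alpha\to\Diamond\beta)$; (K2) $\Diamond(\alpha\to\beta)\to(\Box\alpha\to\Diamond\beta)$; (M1) $\neg\Diamond\alpha\to\Box(\alpha\to\beta)$; (M2) $\Box\beta\to\Box(\alpha\to\beta)$; (M3) $\Diamond\beta\to\Diamond(\alpha\to\beta)$; (M4) $\Diamond\neg\alpha\to\Diamond(\alpha\to\beta)$; (DN1) $\Box\alpha\to\Box\neg\neg\alpha$;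 (DN2) $\Box\neg\neg\alpha\to\Box\alpha$; (D) $\Box\alpha\to\Diamond\alpha$. ${\bf Tm}$: the same as ${\bf Dm}$ but with (D) replaced by (T) $\Box\alpha\to\alpha$. *)

theory Defs
  imports Main
begin

datatype fm = Var nat | Neg fm | Box fm | Imp fm fm

definition Dia :: "fm \<Rightarrow> fm" where "Dia a = Neg (Box (Neg a))"
definition Disj :: "fm \<Rightarrow> fm \<Rightarrow> fm" where "Disj a b = Imp (Neg a) b"
definition Conj :: "fm \<Rightarrow> fm \<Rightarrow> fm" where "Conj a b = Neg (Imp a (Neg b))"

text \<open>Classical propositional axioms (Lukasiewicz system in the signature neg, imp).\<close>
inductive cpl_ax :: "fm \<Rightarrow> bool" where
  A1: "cpl_ax (Imp a (Imp b a))"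
| A2: "cpl_ax (Imp (Imp a (Imp b c)) (Imp (Imp a b) (Imp a c)))"
| A3: "cpl_ax (Imp (Imp (Neg a) (Neg b)) (Imp b a))"

inductive m_ax :: "fm \<Rightarrow> bool" where
  K:   "m_ax (Imp (Box (Imp a b)) (Imp (Box a) (Box b)))"
| K1:  "m_ax (Imp (Box (Imp a b)) (Imp (Dia a) (Dia b)))"
| K2:  "m_ax (Imp (Dia (Imp a b)) (Imp (Box a) (Dia b)))"
| M1:  "m_ax (Imp (Neg (Dia a)) (Box (Imp a b)))"
| M2:  "m_ax (Imp (Box b) (Box (Imp a b)))"
| M3:  "m_ax (Imp (Dia b) (Dia (Imp a b)))"
| M4:  "m_ax (Imp (Dia (Neg a)) (Dia (Imp a b)))"
| DN1: "m_ax (Imp (Box a) (Box (Neg (Neg a))))"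
| DN2: "m_ax (Imp (Box (Neg (Neg a))) (Box a))"

definition Dm_ax :: "fm \<Rightarrow> bool" where
  "Dm_ax f \<longleftrightarrow> cpl_ax f \<or> m_ax f \<or> (\<exists>a. f = Imp (Box a) (Dia a))"

definition Tm_ax :: "fm \<Rightarrow> bool" where
  "Tm_ax f \<longleftrightarrow> cpl_ax f \<or> m_ax f \<or> (\<exists>a. f = Imp (Box a) a)"

inductive derives :: "(fm \<Rightarrow> bool) \<Rightarrow> fm set \<Rightarrow> fm \<Rightarrow> bool" for Ax where
  ax:   "Ax f \<Longrightarrow> derives Ax \<Gamma> f"
| prem: "f \<in> \<Gamma> \<Longrightarrow> derives Ax \<Gamma> f"
| mp:   "derives Ax \<Gamma> (Imp a b) \<Longrightarrow> derives Ax \<Gamma> a \<Longrightarrow> derives Ax \<Gamma> b"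

abbreviation Dm_derives :: "fm set \<Rightarrow> fm \<Rightarrow> bool" where "Dm_derives \<equiv> derives Dm_ax"
abbreviation Tm_derives :: "fm set \<Rightarrow> fm \<Rightarrow> bool" where "Tm_derives \<equiv> derives Tm_ax"

definition circ' :: "fm \<Rightarrow> fm" where
  "circ' g = Conj (Imp (Box g) g) (Imp (Box (Neg g)) (Neg g))"

end

theory Submission
  imports Defs
begin

text \<open>Every \<open>\<circ>'\<gamma>\<close> is a theorem of Tm, its conjuncts
  being instances of (T), and (D) follows in Tm from (T) by contraposition; so a Dm derivation
  from \<open>\<Gamma> \<union> \<circ>'\<Upsilon>\<close> is a Tm derivation from \<open>\<Gamma>\<close>. Conversely, taking \<open>\<Upsilon>\<close> to be all formulas,
  every instance \<open>\<box>\<alpha> \<rightarrow> \<alpha>\<close> of (T) is the first conjunct of the premise \<open>\<circ>'\<alpha>\<close>.\<close>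

lemma derives_transfer:
  assumes "derives A \<Delta> \<phi>"
    and "\<And>f. A f \<Longrightarrow> derives B \<Gamma> f"
    and "\<And>\<psi>. \<psi> \<in> \<Delta> \<Longrightarrow> derives B \<Gamma> \<psi>"
  shows "derives B \<Gamma> \<phi>"
  using assms by (induction rule: derives.induct) (blast intro: derives.mp)+

lemma derives_mono: "derives Ax \<Gamma> \<phi> \<Longrightarrow> \<Gamma> \<subseteq> \<Delta> \<Longrightarrow> derives Ax \<Delta> \<phi>"
  by (erule derives_transfer) (auto intro: derives.ax derives.prem)

locale classical_calculus =
  fixes Ax :: "fm \<Rightarrow> bool"
  assumes cpl_ax_Ax: "cpl_ax f \<Longrightarrow> Ax f"
begin

lemma derives_A1: "derives Ax \<Gamma> (Imp a (Imp b a))"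
  by (intro derives.ax cpl_ax_Ax cpl_ax.A1)

lemma derives_A2: "derives Ax \<Gamma> (Imp (Imp a (Imp b c)) (Imp (Imp a b) (Imp a c)))"
  by (intro derives.ax cpl_ax_Ax cpl_ax.A2)

lemma derives_A3: "derives Ax \<Gamma> (Imp (Imp (Neg a) (Neg b)) (Imp b a))"
  by (intro derives.ax cpl_ax_Ax cpl_ax.A3)

lemma derives_imp_refl: "derives Ax \<Gamma> (Imp a a)"
  by (meson derives_A1 derives_A2 derives.mp)

lemma deduction_theorem: "derives Ax (insert a \<Gamma>) b \<Longrightarrow> derives Ax \<Gamma> (Imp a b)"
proof (induction "insert a \<Gamma>" b rule: derives.induct)
  case (ax f)
  then show ?case by (meson derives_A1 derives.ax derives.mp)
next
  case (prem f)
  then show ?case by (metis derives_A1 derives.mp derives.prem derives_imp_refl insertE)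
next
  case (mp f g)
  then show ?case by (meson derives_A2 derives.mp)
qed

lemma derives_explosion: "derives Ax \<Gamma> (Neg a) \<Longrightarrow> derives Ax \<Gamma> a \<Longrightarrow> derives Ax \<Gamma> b"
  by (meson derives_A1 derives_A3 derives.mp)

lemma derives_double_neg_elim: "derives Ax \<Gamma> (Neg (Neg a)) \<Longrightarrow> derives Ax \<Gamma> a"
  by (meson derives_A1 derives_A3 derives.mp)

lemma derives_double_neg_intro:
  assumes "derives Ax \<Gamma> a"
  shows "derives Ax \<Gamma> (Neg (Neg a))"
proof -
  have "derives Ax \<Gamma> (Imp (Neg (Neg (Neg a))) (Neg a))"
    by (rule deduction_theorem, rule derives_double_neg_elim, rule derives.prem) simp
  then show ?thesis
    using assms by (meson derives_A3 derives.mp)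
qed

lemma derives_Conj_elim1:
  assumes "derives Ax \<Gamma> (Conj a b)"
  shows "derives Ax \<Gamma> a"
proof -
  have "derives Ax (insert a (insert (Neg a) \<Gamma>)) (Neg b)"
    by (rule derives_explosion[of _ a]) (auto intro: derives.prem)
  then have "derives Ax (insert (Neg a) \<Gamma>) (Imp a (Neg b))"
    by (rule deduction_theorem)
  then have "derives Ax \<Gamma> (Imp (Neg a) (Neg (Neg (Imp a (Neg b)))))"
    by (meson deduction_theorem derives_double_neg_intro)
  then show ?thesis
    using assms unfolding Conj_def by (meson derives_A3 derives.mp)
qed

lemma derives_Conj_intro:
  assumes "derives Ax \<Gamma> a" and "derives Ax \<Gamma> b"
  shows "derives Ax \<Gamma> (Conj a b)"
proof -
  let ?\<Delta> = "insert (Neg (Neg (Imp a (Neg b)))) \<Gamma>"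
  have "derives Ax ?\<Delta> (Imp a (Neg b))"
    by (rule derives_double_neg_elim, rule derives.prem) simp
  moreover have "derives Ax ?\<Delta> a"
    using assms(1) derives_mono by blast
  ultimately have "derives Ax \<Gamma> (Imp (Neg (Neg (Imp a (Neg b)))) (Neg b))"
    by (intro deduction_theorem) (rule derives.mp)
  then show ?thesis
    using assms(2) unfolding Conj_def by (meson derives_A3 derives.mp)
qed

end

interpretation Tm: classical_calculus Tm_ax
  by unfold_locales (simp add: Tm_ax_def)

interpretation Dm: classical_calculus Dm_ax
  by unfold_locales (simp add: Dm_ax_def)

lemma Tm_derives_T: "Tm_derives \<Gamma> (Imp (Box a) a)"
  by (rule derives.ax) (simp add: Tm_ax_def)

lemma Tm_derives_D: "Tm_derives \<Gamma> (Imp (Box a) (Dia a))"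
proof -
  let ?\<Delta> = "insert (Box a) \<Gamma>"
  have "Tm_derives (insert (Neg (Neg (Box (Neg a)))) ?\<Delta>) (Neg a)"
    by (rule derives.mp[OF Tm_derives_T], rule Tm.derives_double_neg_elim, rule derives.prem) simp
  then have "Tm_derives ?\<Delta> (Imp (Neg (Neg (Box (Neg a)))) (Neg a))"
    by (rule Tm.deduction_theorem)
  moreover have "Tm_derives ?\<Delta> a"
    by (rule derives.mp[OF Tm_derives_T], rule derives.prem) simp
  ultimately have "Tm_derives ?\<Delta> (Neg (Box (Neg a)))"
    by (meson Tm.derives_A3 derives.mp)
  then show ?thesis
    unfolding Dia_def by (rule Tm.deduction_theorem)
qed

lemma Tm_derives_circ': "Tm_derives \<Gamma> (circ' g)"
  unfolding circ'_def by (intro Tm.derives_Conj_intro Tm_derives_T)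

lemma Dm_derives_T_from_circ':
  assumes "circ' a \<in> \<Gamma>"
  shows "Dm_derives \<Gamma> (Imp (Box a) a)"
  using derives.prem[OF assms] unfolding circ'_def by (rule Dm.derives_Conj_elim1)

lemma Tm_ax_Dm_derivable: "Tm_ax f \<Longrightarrow> Dm_derives (\<Gamma> \<union> range circ') f"
  unfolding Tm_ax_def
  by (auto intro: derives.ax Dm_derives_T_from_circ' simp: Dm_ax_def)

lemma Dm_ax_Tm_derivable: "Dm_ax f \<Longrightarrow> Tm_derives \<Gamma> f"
  unfolding Dm_ax_def by (auto intro: derives.ax Tm_derives_D simp: Tm_ax_def)

theorem mainTheorem8:
  fixes \<Gamma> :: "fm set" and \<phi> :: fm
  assumes "finite \<Gamma>"
  shows "Tm_derives \<Gamma> \<phi> \<longleftrightarrow> (\<exists>\<Upsilon>. Dm_derives (\<Gamma> \<union> circ' ` \<Upsilon>) \<phi>)"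
proof
  assume "Tm_derives \<Gamma> \<phi>"
  then have "Dm_derives (\<Gamma> \<union> range circ') \<phi>"
    by (rule derives_transfer) (auto intro: Tm_ax_Dm_derivable derives.prem)
  then show "\<exists>\<Upsilon>. Dm_derives (\<Gamma> \<union> circ' ` \<Upsilon>) \<phi>" ..
next
  assume "\<exists>\<Upsilon>. Dm_derives (\<Gamma> \<union> circ' ` \<Upsilon>) \<phi>"
  then obtain \<Upsilon> where "Dm_derives (\<Gamma> \<union> circ' ` \<Upsilon>) \<phi>" ..
  then show "Tm_derives \<Gamma> \<phi>"
    by (rule derives_transfer) (auto intro: Dm_ax_Tm_derivable derives.prem Tm_derives_circ')
qed

end
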